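(* Let $X$ be a non-empty set, $R$ a binary relation on $X$, and $\tau$ a compact topology on $X$ such that $R$ is upper tc-semicontinuous with respect to $\tau$. Let $\mu(\Xi,\widetilde{R})=\{X^*_i : i\in I\}$ be the family of $\widetilde{R}$-maximal strong components of $(X,R)$. Then a set $W\subseteq X$ is a $w$-stable set of $(X,R)$ if and only if there exist $J\subseteq I$ and, for each $j\in J$, an element $x_j\in X^*_j$ such that $W=\{x_j : j\in J\}$ (i.e. $W$ is contained in the union of the $\widetilde{R}$-maximal components and contains at most one alternative from each of them).
   Context: For a binary relation $R$ on $X$, the transitive closure $\overline{R}$ is defined by: $x\overline{R}y$ iff there exist $K\ge 1$ and $x_0,\dots,x_K\in X$ with $x_0=x$, $x_K=y$, and $x_{k-1}Rx_k$ for all $k\in\{1,\dots,K\}$. A set $F\subseteq X$ is a $w$-stable set of $(X,R)$ if (i) (internal stability) for all distinct $x,y\in F$, $(x,y)\notin\overline{R}$; and (ii) (external stability) for all $x\in F$ and $y\in X\setminus F$, if $y\overline{R}x$ then $x\overline{R}y$. $R$ is upper tc-semicontinuous with respect to $\tau$ if for every $x\in X$ the set $\{y\in X: x\overline{R}y\}$ is open in $\tau$. A topology is compact if every open cover of $X$ has a finite subcover. Strong components: define the equivalence relation $x\sim y$ iff $x=y$ or ($x\overline{R}y$ and $y\overline{R}x$). The ground sets of the strong components of $(X,R)$ are the equivalence classes of $\sim$ (so an element lying on no cycle forms a singleton component); they partition $X$. Let $\Xi$ be the set of these classes. The contraction of $(X,R)$ is $(\Xi,\widetilde{R})$, where for $A,B\in\Xi$,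 $A\widetilde{R}B$ iff there exist $x\in A$, $y\in B$ with $xRy$. A class $A\in\Xi$ is $\widetilde{R}$-maximal if there is no $B\in\Xi$ with $B\ne A$ and $B\widetilde{R}A$. $\mu(\Xi,\widetilde{R})$ denotes the family of $\widetilde{R}$-maximal classes in $\Xi$. *)

theory Defs
  imports "HOL-Analysis.Analysis"
begin

text \<open>Transitive closure of R is the library's trancl (R^+), which matches the
paper's definition (chains of length K \<ge> 1).\<close>

definition w_stable :: "'a set \<Rightarrow> ('a \<times> 'a) set \<Rightarrow> 'a set \<Rightarrow> bool" where
  "w_stable X R F \<longleftrightarrow> F \<subseteq> X
     \<and> (\<forall>x\<in>F. \<forall>y\<in>F. x \<noteq> y \<longrightarrow> (x, y) \<notin> R\<^sup>+)
     \<and> (\<forall>x\<in>F. \<forall>y\<in>X - F. (y, x) \<in> R\<^sup>+ \<longrightarrow> (x, y) \<in> R\<^sup>+)"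

definition upper_tc_semicontinuous :: "'a topology \<Rightarrow> 'a set \<Rightarrow> ('a \<times> 'a) set \<Rightarrow> bool" where
  "upper_tc_semicontinuous T X R \<longleftrightarrow> (\<forall>x\<in>X. openin T {y\<in>X. (x, y) \<in> R\<^sup>+})"

definition strong_equiv :: "'a set \<Rightarrow> ('a \<times> 'a) set \<Rightarrow> ('a \<times> 'a) set" where
  "strong_equiv X R = {(x, y). x \<in> X \<and> y \<in> X \<and> (x = y \<or> ((x, y) \<in> R\<^sup>+ \<and> (y, x) \<in> R\<^sup>+))}"

definition strong_components :: "'a set \<Rightarrow> ('a \<times> 'a) set \<Rightarrow> 'a set set" where
  "strong_components X R = X // strong_equiv X R"

definition contr_rel :: "('a \<times> 'a) set \<Rightarrow> 'a set \<Rightarrow> 'a set \<Rightarrow> bool" where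
  "contr_rel R A B \<longleftrightarrow> (\<exists>x\<in>A. \<exists>y\<in>B. (x, y) \<in> R)"

definition maximal_components :: "'a set \<Rightarrow> ('a \<times> 'a) set \<Rightarrow> 'a set set" where
  "maximal_components X R = {A \<in> strong_components X R.
      \<not> (\<exists>B\<in>strong_components X R. B \<noteq> A \<and> contr_rel R B A)}"

end

theory Submission
  imports Defs
begin

text \<open>A strong component is \<open>\<widetilde>R\<close>-maximal exactly when no \<open>R\<close>-edge enters it, hence
when it is closed under \<open>R\<^sup>+\<close>-predecessors. Internal stability lets a \<open>w\<close>-stable set meet
each component in at most one point, and external stability forces every
\<open>R\<^sup>+\<close>-predecessor of a point of the set into that point's component, which is therefore
maximal. Conversely, distinct maximal components are not joined by \<open>R\<^sup>+\<close> at all, while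
inside a component everything is \<open>R\<^sup>+\<close>-equivalent, so one point from each of some maximal
components is \<open>w\<close>-stable.\<close>

lemma equiv_strong_equiv: "equiv X (strong_equiv X R)"
  unfolding equiv_def refl_on_def sym_def trans_def strong_equiv_def
  by (auto intro: trancl_trans)

lemma strong_equiv_class_in_components:
  "x \<in> X \<Longrightarrow> strong_equiv X R `` {x} \<in> strong_components X R"
  unfolding strong_components_def by (rule quotientI)

lemma in_strong_equiv_class: "x \<in> X \<Longrightarrow> x \<in> strong_equiv X R `` {x}"
  unfolding strong_equiv_def by auto

lemma strong_component_eq_class:
  assumes "A \<in> strong_components X R" "x \<in> A"
  shows "A = strong_equiv X R `` {x}"
proof -
  obtain a where "A = strong_equiv X R `` {a}"
    using assms(1) unfolding strong_components_def by (rule quotientE)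
  moreover from this have "(a, x) \<in> strong_equiv X R" using assms(2) by simp
  ultimately show ?thesis using equiv_class_eq[OF equiv_strong_equiv] by simp
qed

lemma strong_components_subset: "A \<in> strong_components X R \<Longrightarrow> A \<subseteq> X"
  unfolding strong_components_def strong_equiv_def by (auto elim!: quotientE)

lemma strong_component_trancl:
  assumes "A \<in> strong_components X R" "x \<in> A" "y \<in> A" "x \<noteq> y"
  shows "(x, y) \<in> R\<^sup>+"
  using strong_component_eq_class[OF assms(1,2)] assms(3,4)
  unfolding strong_equiv_def by auto

lemma maximal_components_iff_pred_closed:
  assumes "R \<subseteq> X \<times> X"
  shows "A \<in> maximal_components X R \<longleftrightarrow>
    A \<in> strong_components X R \<and> (\<forall>w\<in>A. \<forall>z. (z, w) \<in> R \<longrightarrow> z \<in> A)"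
    (is "_ \<longleftrightarrow> _ \<and> ?closed")
proof -
  have "(\<forall>B\<in>strong_components X R. contr_rel R B A \<longrightarrow> B = A) \<longleftrightarrow> ?closed"
    if A: "A \<in> strong_components X R"
  proof
    assume no_entry: "\<forall>B\<in>strong_components X R. contr_rel R B A \<longrightarrow> B = A"
    show ?closed
    proof (intro ballI allI impI)
      fix w z assume "w \<in> A" "(z, w) \<in> R"
      then have "z \<in> X" using assms by auto
      let ?B = "strong_equiv X R `` {z}"
      have "contr_rel R ?B A"
        unfolding contr_rel_def
        using in_strong_equiv_class[OF \<open>z \<in> X\<close>] \<open>w \<in> A\<close> \<open>(z, w) \<in> R\<close> by blast
      then have "?B = A" using no_entry strong_equiv_class_in_components[OF \<open>z \<in> X\<close>] by simp
      then show "z \<in> A" using in_strong_equiv_class[OF \<open>z \<in> X\<close>, of R] by simp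
    qed
  next
    assume closed: ?closed
    show "\<forall>B\<in>strong_components X R. contr_rel R B A \<longrightarrow> B = A"
    proof (intro ballI impI)
      fix B assume "B \<in> strong_components X R" "contr_rel R B A"
      then obtain x y where "x \<in> B" "y \<in> A" "(x, y) \<in> R"
        unfolding contr_rel_def by blast
      then have "x \<in> A" using closed by blast
      then show "B = A"
        using strong_component_eq_class[OF A] strong_component_eq_class[OF \<open>B \<in> _\<close> \<open>x \<in> B\<close>]
        by simp
    qed
  qed
  then show ?thesis unfolding maximal_components_def by auto
qed

lemma maximal_component_trancl_pred:
  assumes "R \<subseteq> X \<times> X" "A \<in> maximal_components X R"
  shows "(z, y) \<in> R\<^sup>+ \<Longrightarrow> y \<in> A \<Longrightarrow> z \<in> A"
proof (induction rule: converse_trancl_induct)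
  case (base z)
  then show ?case using assms(2) unfolding maximal_components_iff_pred_closed[OF assms(1)] by blast
next
  case (step z z')
  then show ?case using assms(2) unfolding maximal_components_iff_pred_closed[OF assms(1)] by blast
qed

lemma w_stable_class_inter:
  assumes "w_stable X R W" "x \<in> W"
  shows "strong_equiv X R `` {x} \<inter> W = {x}"
  using assms unfolding w_stable_def strong_equiv_def by auto

lemma w_stable_class_maximal:
  assumes RX: "R \<subseteq> X \<times> X" and W: "w_stable X R W" and "x \<in> W"
  shows "strong_equiv X R `` {x} \<in> maximal_components X R"
proof -
  let ?A = "strong_equiv X R `` {x}"
  have "x \<in> X" using W \<open>x \<in> W\<close> unfolding w_stable_def by blast
  have "z \<in> ?A" if "w \<in> ?A" "(z, w) \<in> R" for w z
  proof -
    have "z \<in> X" using that RX by auto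
    have "(w, x) \<in> R\<^sup>*"
      using \<open>w \<in> ?A\<close> unfolding strong_equiv_def by auto
    then have zx: "(z, x) \<in> R\<^sup>+" using \<open>(z, w) \<in> R\<close> by simp
    show "z \<in> ?A"
    proof (cases "z \<in> W")
      case True
      then have "z = x" using W \<open>x \<in> W\<close> zx unfolding w_stable_def by blast
      then show ?thesis using in_strong_equiv_class[OF \<open>x \<in> X\<close>, of R] by simp
    next
      case False
      then have "(x, z) \<in> R\<^sup>+" using W \<open>x \<in> W\<close> \<open>z \<in> X\<close> zx unfolding w_stable_def by blast
      then show ?thesis using zx \<open>x \<in> X\<close> \<open>z \<in> X\<close> unfolding strong_equiv_def by auto
    qed
  qed
  then show ?thesis
    using maximal_components_iff_pred_closed[OF RX] strong_equiv_class_in_components[OF \<open>x \<in> X\<close>]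
    by blast
qed

lemma w_stable_imp_selection:
  assumes RX: "R \<subseteq> X \<times> X" and W: "w_stable X R W"
  shows "\<exists>J f. J \<subseteq> maximal_components X R \<and> (\<forall>A\<in>J. f A \<in> A) \<and> W = f ` J"
proof -
  define cl where "cl x = strong_equiv X R `` {x}" for x
  have "inj_on cl W"
  proof (rule inj_onI)
    fix x y assume "x \<in> W" "y \<in> W" "cl x = cl y"
    then have "{x} = {y}"
      using w_stable_class_inter[OF W \<open>x \<in> W\<close>] w_stable_class_inter[OF W \<open>y \<in> W\<close>]
      unfolding cl_def by (metis (no_types))
    then show "x = y" by simp
  qed
  have "\<forall>A\<in>cl ` W. inv_into W cl A \<in> A"
  proof
    fix A assume "A \<in> cl ` W"
    then obtain x where "x \<in> W" "A = cl x" by blast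
    then have "x \<in> X" using W unfolding w_stable_def by blast
    show "inv_into W cl A \<in> A"
      using inv_into_f_f[OF \<open>inj_on cl W\<close> \<open>x \<in> W\<close>] in_strong_equiv_class[OF \<open>x \<in> X\<close>, of R]
      unfolding \<open>A = cl x\<close> cl_def by simp
  qed
  moreover have "W = inv_into W cl ` cl ` W"
    using inv_into_image_cancel[OF \<open>inj_on cl W\<close> subset_refl] by simp
  moreover have "cl ` W \<subseteq> maximal_components X R"
    using w_stable_class_maximal[OF RX W] unfolding cl_def by (rule image_subsetI)
  ultimately show ?thesis by blast
qed

lemma selection_w_stable:
  assumes RX: "R \<subseteq> X \<times> X" and J: "J \<subseteq> maximal_components X R" and f: "\<forall>A\<in>J. f A \<in> A"
  shows "w_stable X R (f ` J)"
proof -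
  have comp: "A \<in> strong_components X R" if "A \<in> J" for A
    using that J unfolding maximal_components_def by blast
  have pred: "z \<in> B" if "B \<in> J" "(z, f B) \<in> R\<^sup>+" for z B
    using maximal_component_trancl_pred[OF RX subsetD[OF J \<open>B \<in> J\<close>] \<open>(z, f B) \<in> R\<^sup>+\<close>]
      f \<open>B \<in> J\<close> by blast
  have "f ` J \<subseteq> X" using f comp strong_components_subset by blast
  moreover have "\<forall>x\<in>f ` J. \<forall>y\<in>f ` J. x \<noteq> y \<longrightarrow> (x, y) \<notin> R\<^sup>+"
  proof (intro ballI impI notI)
    fix x y assume "x \<in> f ` J" "y \<in> f ` J" "x \<noteq> y" "(x, y) \<in> R\<^sup>+"
    then obtain A B where A: "A \<in> J" "x = f A" and B: "B \<in> J" "y = f B"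
      by blast
    then have "f A \<in> B" using pred \<open>(x, y) \<in> R\<^sup>+\<close> by simp
    then have "A = B"
      using strong_component_eq_class[OF comp[OF A(1)], of "f A"]
        strong_component_eq_class[OF comp[OF B(1)] \<open>f A \<in> B\<close>] f A(1) by simp
    then show False using \<open>x \<noteq> y\<close> A B by simp
  qed
  moreover have "\<forall>x\<in>f ` J. \<forall>y\<in>X - f ` J. (y, x) \<in> R\<^sup>+ \<longrightarrow> (x, y) \<in> R\<^sup>+"
  proof (intro ballI impI)
    fix x y assume "x \<in> f ` J" "y \<in> X - f ` J" "(y, x) \<in> R\<^sup>+"
    then obtain A where A: "A \<in> J" "x = f A" and "x \<noteq> y"
      by blast
    then have "y \<in> A" using pred \<open>(y, x) \<in> R\<^sup>+\<close> by simp
    then show "(x, y) \<in> R\<^sup>+"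
      using strong_component_trancl[OF comp[OF A(1)]] f A \<open>x \<noteq> y\<close> by simp
  qed
  ultimately show ?thesis unfolding w_stable_def by (intro conjI)
qed

theorem theorem2:
  fixes X :: "'a set" and R :: "('a \<times> 'a) set" and T :: "'a topology" and W :: "'a set"
  assumes "X \<noteq> {}"
    and "R \<subseteq> X \<times> X"
    and "topspace T = X"
    and "compact_space T"
    and "upper_tc_semicontinuous T X R"
  shows "w_stable X R W \<longleftrightarrow>
    (\<exists>J f. J \<subseteq> maximal_components X R \<and> (\<forall>A\<in>J. f A \<in> A) \<and> W = f ` J)"
proof
  assume "w_stable X R W"
  then show "\<exists>J f. J \<subseteq> maximal_components X R \<and> (\<forall>A\<in>J. f A \<in> A) \<and> W = f ` J"
    by (rule w_stable_imp_selection[OF assms(2)])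
next
  assume "\<exists>J f. J \<subseteq> maximal_components X R \<and> (\<forall>A\<in>J. f A \<in> A) \<and> W = f ` J"
  then obtain J f where "J \<subseteq> maximal_components X R" "\<forall>A\<in>J. f A \<in> A" "W = f ` J"
    by blast
  then show "w_stable X R W" using selection_w_stable[OF assms(2)] by simp
qed

end
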